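(* Let $(G,\preceq)$ be an oriented group with positive cone $C=\{x\in G\mid\mathbf{1}\preceq x\}$, and let $H$ be a subgroup of $G$. On the quotient set $G/H=\{\overline{x}=x\cdot H\mid x\in G\}$ define $\overline{x}\sqsubseteq\overline{y}\iff x^{-1}\cdot y\in C\cdot H$. Then $(G/H,\sqsubseteq)$ is an oriented set if and only if $$(\ast)\qquad \text{for all } q,r\in G:\ \mathbf{1}\preceq q\ \wedge\ \mathbf{1}\preceq r\ \wedge\ q\cdot r\in H\implies q\in H\wedge r\in H.$$ Moreover, if $(\ast)$ holds and $H$ is a normal subgroup of $G$, then $(G/H,\sqsubseteq)$ is an oriented group.
   Context: An orientation is a reflexive, antisymmetric binary relation; an oriented set is a set with an orientation. An oriented group is a group $G$ (operation $\cdot$, neutral element $\mathbf{1}$) with an orientation $\preceq$ such that $x\preceq y$ implies $x\cdot z\preceq y\cdot z$ and $z\cdot x\preceq z\cdot y$ for all $x,y,z\in G$. *)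

theory Defs
  imports "HOL-Algebra.Left_Coset"
begin

definition orientation_on :: "'b set \<Rightarrow> ('b \<Rightarrow> 'b \<Rightarrow> bool) \<Rightarrow> bool" where
  "orientation_on S R \<longleftrightarrow>
     (\<forall>x\<in>S. R x x) \<and> (\<forall>x\<in>S. \<forall>y\<in>S. R x y \<and> R y x \<longrightarrow> x = y)"

definition oriented_group :: "('a, 'c) monoid_scheme \<Rightarrow> ('a \<Rightarrow> 'a \<Rightarrow> bool) \<Rightarrow> bool" where
  "oriented_group G R \<longleftrightarrow> group G \<and> orientation_on (carrier G) R \<and>
     (\<forall>x\<in>carrier G. \<forall>y\<in>carrier G. \<forall>z\<in>carrier G.
        R x y \<longrightarrow> R (x \<otimes>\<^bsub>G\<^esub> z) (y \<otimes>\<^bsub>G\<^esub> z) \<and> R (z \<otimes>\<^bsub>G\<^esub> x) (z \<otimes>\<^bsub>G\<^esub> y))"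

definition pos_cone :: "('a, 'c) monoid_scheme \<Rightarrow> ('a \<Rightarrow> 'a \<Rightarrow> bool) \<Rightarrow> 'a set" where
  "pos_cone G R = {x \<in> carrier G. R \<one>\<^bsub>G\<^esub> x}"

text \<open>The induced relation on left cosets xH: xH below yH iff inv x * y is in C H
  (expressed via representatives; it is independent of them for an oriented group).\<close>
definition quot_rel :: "('a, 'c) monoid_scheme \<Rightarrow> ('a \<Rightarrow> 'a \<Rightarrow> bool) \<Rightarrow> 'a set \<Rightarrow> 'a set \<Rightarrow> 'a set \<Rightarrow> bool" where
  "quot_rel G R H A B \<longleftrightarrow> (\<exists>x\<in>carrier G. \<exists>y\<in>carrier G.
      A = x <#\<^bsub>G\<^esub> H \<and> B = y <#\<^bsub>G\<^esub> H \<and>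
      inv\<^bsub>G\<^esub> x \<otimes>\<^bsub>G\<^esub> y \<in> pos_cone G R <#>\<^bsub>G\<^esub> H)"

end

theory Submission
  imports Defs
begin

(* The relation on cosets does not depend on the representatives
   because C H is stable under multiplication by elements of H on either side: a conjugate of a
   positive element is positive, the orientation being compatible with multiplication on both
   sides. If xH and yH are related both ways, then a = inv x y
   and inv a both lie in C H; writing a = c h and inv a = c' h', the element c (h c' inv h) =
   inv (h' h) of H is a product of two positives, so the condition forces c, hence a, into H.
   Conversely, for positive q, r with q r in H, the cosets H and q H are related both ways because
   inv q = r inv (q r), so antisymmetry gives q in H and then r in H. For normal H, C H is stable
   under conjugation by all of G, which makes the relation compatible with the product of G/H. *)

lemma (in group) inv_mult_cancel_left [simp]:
  "x \<in> carrier G \<Longrightarrow> y \<in> carrier G \<Longrightarrow> inv x \<otimes> (x \<otimes> y) = y"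
  by (simp add: m_assoc [symmetric])

lemma (in group) mult_inv_cancel_left [simp]:
  "x \<in> carrier G \<Longrightarrow> y \<in> carrier G \<Longrightarrow> x \<otimes> (inv x \<otimes> y) = y"
  by (simp add: m_assoc [symmetric])

lemma (in group) l_coset_eq_iff:
  assumes H: "subgroup H G" and x: "x \<in> carrier G" and y: "y \<in> carrier G"
  shows "x <# H = y <# H \<longleftrightarrow> inv x \<otimes> y \<in> H"
proof
  assume "x <# H = y <# H"
  then have "y \<in> x <# H"
    using lcos_self[OF y H] by simp
  then show "inv x \<otimes> y \<in> H"
    using subgroup.lcos_module_imp[OF H is_group x] by blast
next
  assume "inv x \<otimes> y \<in> H"
  then show "x <# H = y <# H"
    using l_repr_independence[OF _ x H] subgroup.lcos_module_rev[OF H is_group x y] by blast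
qed

lemma l_coset_in_lcosets:
  fixes G (structure)
  shows "x \<in> carrier G \<Longrightarrow> x <# H \<in> lcosets H"
  unfolding LCOSETS_def by blast

lemma (in normal) lcos_sum:
  "x \<in> carrier G \<Longrightarrow> y \<in> carrier G \<Longrightarrow> (x <# H) <#> (y <# H) = (x \<otimes> y) <# H"
  using coset_eq rcos_sum by simp

lemma (in normal) LMod_eq_Mod: "G LMod H = G Mod H"
proof -
  have "lcosets H = rcosets H"
    unfolding LCOSETS_def RCOSETS_def using coset_eq by auto
  then show ?thesis
    unfolding LFactGroup_def FactGroup_def by simp
qed

definition pos_factor_closed :: "('a, 'c) monoid_scheme \<Rightarrow> ('a \<Rightarrow> 'a \<Rightarrow> bool) \<Rightarrow> 'a set \<Rightarrow> bool" where
  "pos_factor_closed G R H \<longleftrightarrow> (\<forall>q\<in>carrier G. \<forall>r\<in>carrier G.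
     R \<one>\<^bsub>G\<^esub> q \<and> R \<one>\<^bsub>G\<^esub> r \<and> q \<otimes>\<^bsub>G\<^esub> r \<in> H \<longrightarrow> q \<in> H \<and> r \<in> H)"

lemma pos_factor_closedD:
  fixes G (structure)
  assumes "pos_factor_closed G R H" "q \<in> carrier G" "r \<in> carrier G" "R \<one> q" "R \<one> r" "q \<otimes> r \<in> H"
  shows "q \<in> H"
  using assms unfolding pos_factor_closed_def by blast

lemma mem_pos_cone_set_mult_iff:
  fixes G (structure)
  shows "a \<in> pos_cone G R <#> K \<longleftrightarrow> (\<exists>c\<in>carrier G. R \<one> c \<and> (\<exists>k\<in>K. a = c \<otimes> k))"
  unfolding pos_cone_def set_mult_def by auto

locale oriented_grp = group +
  fixes R :: "'a \<Rightarrow> 'a \<Rightarrow> bool"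
  assumes oriented: "oriented_group G R"
begin

lemma R_refl: "x \<in> carrier G \<Longrightarrow> R x x"
  using oriented unfolding oriented_group_def orientation_on_def by blast

lemma R_mult_left_mono: "\<lbrakk>R x y; x \<in> carrier G; y \<in> carrier G; z \<in> carrier G\<rbrakk> \<Longrightarrow> R (z \<otimes> x) (z \<otimes> y)"
  using oriented unfolding oriented_group_def by blast

lemma R_mult_right_mono: "\<lbrakk>R x y; x \<in> carrier G; y \<in> carrier G; z \<in> carrier G\<rbrakk> \<Longrightarrow> R (x \<otimes> z) (y \<otimes> z)"
  using oriented unfolding oriented_group_def by blast

lemma pos_cone_conj_closed:
  assumes c: "c \<in> carrier G" "R \<one> c" and g: "g \<in> carrier G"
  shows "R \<one> (g \<otimes> c \<otimes> inv g)"
proof -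
  have "R g (g \<otimes> c)"
    using R_mult_left_mono[OF c(2) _ c(1) g] g by simp
  then show ?thesis
    using R_mult_right_mono[of g "g \<otimes> c" "inv g"] c g by simp
qed

lemma pos_cone_set_mult_sandwich:
  assumes a: "a \<in> pos_cone G R <#> K" and K: "K \<subseteq> carrier G"
    and g: "g \<in> carrier G" and k: "k \<in> carrier G" and gKk: "\<And>h. h \<in> K \<Longrightarrow> g \<otimes> h \<otimes> k \<in> K"
  shows "g \<otimes> a \<otimes> k \<in> pos_cone G R <#> K"
proof -
  obtain c h where c: "c \<in> carrier G" "R \<one> c" and h: "h \<in> K" and a_eq: "a = c \<otimes> h"
    using a unfolding mem_pos_cone_set_mult_iff by blast
  have "g \<otimes> a \<otimes> k = (g \<otimes> c \<otimes> inv g) \<otimes> (g \<otimes> h \<otimes> k)"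
    using c h g k K a_eq by (simp add: m_assoc subsetD)
  then show ?thesis
    unfolding mem_pos_cone_set_mult_iff
    using pos_cone_conj_closed[OF c g] gKk[OF h] c g by blast
qed

end

locale oriented_grp_subgroup = oriented_grp G R + subgroup H G
  for G (structure) and R and H
begin

lemma quot_rel_l_coset_iff:
  assumes x: "x \<in> carrier G" and y: "y \<in> carrier G"
  shows "quot_rel G R H (x <# H) (y <# H) \<longleftrightarrow> inv x \<otimes> y \<in> pos_cone G R <#> H"
proof
  assume "quot_rel G R H (x <# H) (y <# H)"
  then obtain x' y' where x': "x' \<in> carrier G" "x <# H = x' <# H"
    and y': "y' \<in> carrier G" "y <# H = y' <# H" and pos: "inv x' \<otimes> y' \<in> pos_cone G R <#> H"
    unfolding quot_rel_def by blast
  have "inv x \<otimes> x' \<in> H" "inv y' \<otimes> y \<in> H"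
    using l_coset_eq_iff[OF subgroup_axioms] x y x' y' by metis+
  then have "(inv x \<otimes> x') \<otimes> (inv x' \<otimes> y') \<otimes> (inv y' \<otimes> y) \<in> pos_cone G R <#> H"
    using pos_cone_set_mult_sandwich[OF pos subset] x y x' y' by simp
  moreover have "(inv x \<otimes> x') \<otimes> (inv x' \<otimes> y') \<otimes> (inv y' \<otimes> y) = inv x \<otimes> y"
    using x y x' y' by (simp add: m_assoc)
  ultimately show "inv x \<otimes> y \<in> pos_cone G R <#> H"
    by simp
next
  assume "inv x \<otimes> y \<in> pos_cone G R <#> H"
  then show "quot_rel G R H (x <# H) (y <# H)"
    unfolding quot_rel_def using x y by blast
qed

lemma orientation_quot_rel_imp_pos_factor_closed:
  assumes orientation: "orientation_on (lcosets H) (quot_rel G R H)"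
  shows "pos_factor_closed G R H"
  unfolding pos_factor_closed_def
proof (intro ballI impI)
  fix q r
  assume q: "q \<in> carrier G" and r: "r \<in> carrier G" and qr: "R \<one> q \<and> R \<one> r \<and> q \<otimes> r \<in> H"
  have "q \<in> pos_cone G R <#> H"
    unfolding mem_pos_cone_set_mult_iff using q qr by force
  then have up: "quot_rel G R H (\<one> <# H) (q <# H)"
    using quot_rel_l_coset_iff q by simp
  have "inv q = r \<otimes> inv (q \<otimes> r)"
    using q r by (simp add: inv_mult_group m_assoc)
  then have "inv q \<in> pos_cone G R <#> H"
    unfolding mem_pos_cone_set_mult_iff using r qr by auto
  then have down: "quot_rel G R H (q <# H) (\<one> <# H)"
    using quot_rel_l_coset_iff q by simp
  have "\<one> <# H = q <# H"
    using orientation up down l_coset_in_lcosets[OF monoid.one_closed[OF monoid_axioms]] l_coset_in_lcosets[OF q] unfolding orientation_on_def by simp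
  then have "q \<in> H"
    using l_coset_eq_iff[OF subgroup_axioms] q by simp
  moreover have "inv q \<otimes> (q \<otimes> r) \<in> H"
    using subgroup.m_closed[OF subgroup_axioms] subgroup.m_inv_closed[OF subgroup_axioms]
      \<open>q \<in> H\<close> qr by blast
  ultimately show "q \<in> H \<and> r \<in> H"
    using q r by simp
qed

lemma pos_factor_closed_imp_mem:
  assumes closed: "pos_factor_closed G R H"
    and a: "a \<in> pos_cone G R <#> H" "inv a \<in> pos_cone G R <#> H"
  shows "a \<in> H"
proof -
  obtain c h where c: "c \<in> carrier G" "R \<one> c" and h: "h \<in> H" and a_eq: "a = c \<otimes> h"
    using a(1) unfolding mem_pos_cone_set_mult_iff by blast
  obtain c' h' where c': "c' \<in> carrier G" "R \<one> c'" and h': "h' \<in> H" and inv_a_eq: "inv a = c' \<otimes> h'"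
    using a(2) unfolding mem_pos_cone_set_mult_iff by blast
  have h_carrier: "h \<in> carrier G" "h' \<in> carrier G"
    using h h' by auto
  have "c \<otimes> (h \<otimes> c' \<otimes> inv h) = a \<otimes> inv a \<otimes> inv h' \<otimes> inv h"
    using c c' h_carrier a_eq inv_a_eq by (simp add: m_assoc)
  also have "\<dots> = inv h' \<otimes> inv h"
    using c h_carrier a_eq by simp
  also have "\<dots> \<in> H"
    using h h' by (intro subgroup.m_closed[OF subgroup_axioms] subgroup.m_inv_closed[OF subgroup_axioms])
  finally have "c \<in> H"
    using pos_factor_closedD[OF closed c(1) _ c(2) pos_cone_conj_closed[OF c' h_carrier(1)]] c' h_carrier
    by simp
  then show ?thesis
    using a_eq h by simp
qed

lemma pos_factor_closed_imp_orientation_quot_rel: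
  assumes closed: "pos_factor_closed G R H"
  shows "orientation_on (lcosets H) (quot_rel G R H)"
  unfolding orientation_on_def
proof (intro conjI ballI impI)
  fix A
  assume "A \<in> lcosets H"
  then obtain x where x: "x \<in> carrier G" "A = x <# H"
    unfolding LCOSETS_def by blast
  have "\<one> \<in> pos_cone G R <#> H"
    unfolding mem_pos_cone_set_mult_iff using R_refl by force
  then show "quot_rel G R H A A"
    using quot_rel_l_coset_iff x by simp
next
  fix A B
  assume "A \<in> lcosets H" "B \<in> lcosets H" and AB: "quot_rel G R H A B \<and> quot_rel G R H B A"
  then obtain x y where x: "x \<in> carrier G" "A = x <# H" and y: "y \<in> carrier G" "B = y <# H"
    unfolding LCOSETS_def by blast
  have "inv x \<otimes> y \<in> pos_cone G R <#> H" "inv (inv x \<otimes> y) \<in> pos_cone G R <#> H"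
    using AB quot_rel_l_coset_iff x y by (simp_all add: inv_mult_group)
  then show "A = B"
    using pos_factor_closed_imp_mem[OF closed] l_coset_eq_iff[OF subgroup_axioms] x y by simp
qed

lemma orientation_quot_rel_iff_pos_factor_closed:
  "orientation_on (lcosets H) (quot_rel G R H) \<longleftrightarrow> pos_factor_closed G R H"
  using orientation_quot_rel_imp_pos_factor_closed pos_factor_closed_imp_orientation_quot_rel by blast

lemma quot_rel_mult_mono:
  assumes "H \<lhd> G" and x: "x \<in> carrier G" and y: "y \<in> carrier G" and z: "z \<in> carrier G"
    and xy: "quot_rel G R H (x <# H) (y <# H)"
  shows "quot_rel G R H ((x \<otimes> z) <# H) ((y \<otimes> z) <# H)"
    and "quot_rel G R H ((z \<otimes> x) <# H) ((z \<otimes> y) <# H)"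
proof -
  interpret normal H G by fact
  have pos: "inv x \<otimes> y \<in> pos_cone G R <#> H"
    using xy quot_rel_l_coset_iff x y by simp
  have "inv z \<otimes> (inv x \<otimes> y) \<otimes> z \<in> pos_cone G R <#> H"
    using pos_cone_set_mult_sandwich[OF pos subset] inv_op_closed1 z by simp
  moreover have "inv (x \<otimes> z) \<otimes> (y \<otimes> z) = inv z \<otimes> (inv x \<otimes> y) \<otimes> z"
    using x y z by (simp add: inv_mult_group m_assoc)
  ultimately show "quot_rel G R H ((x \<otimes> z) <# H) ((y \<otimes> z) <# H)"
    using quot_rel_l_coset_iff x y z by simp
  have "inv (z \<otimes> x) \<otimes> (z \<otimes> y) = inv x \<otimes> y"
    using x y z by (simp add: inv_mult_group m_assoc)
  then show "quot_rel G R H ((z \<otimes> x) <# H) ((z \<otimes> y) <# H)"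
    using pos quot_rel_l_coset_iff x y z by simp
qed

lemma oriented_group_LMod:
  assumes closed: "pos_factor_closed G R H" and normal: "H \<lhd> G"
  shows "oriented_group (G LMod H) (quot_rel G R H)"
  unfolding oriented_group_def
proof (intro conjI ballI impI)
  show "group (G LMod H)"
    using normal.LMod_eq_Mod normal.factorgroup_is_group normal by metis
  show "orientation_on (carrier (G LMod H)) (quot_rel G R H)"
    using pos_factor_closed_imp_orientation_quot_rel[OF closed] by (simp add: LFactGroup_def)
next
  fix X Y Z
  assume "X \<in> carrier (G LMod H)" "Y \<in> carrier (G LMod H)" "Z \<in> carrier (G LMod H)"
    and XY: "quot_rel G R H X Y"
  then obtain x y z where x: "x \<in> carrier G" "X = x <# H" and y: "y \<in> carrier G" "Y = y <# H"
    and z: "z \<in> carrier G" "Z = z <# H"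
    unfolding LFactGroup_def LCOSETS_def by auto
  show "quot_rel G R H (X \<otimes>\<^bsub>G LMod H\<^esub> Z) (Y \<otimes>\<^bsub>G LMod H\<^esub> Z)"
    and "quot_rel G R H (Z \<otimes>\<^bsub>G LMod H\<^esub> X) (Z \<otimes>\<^bsub>G LMod H\<^esub> Y)"
    using quot_rel_mult_mono[OF normal x(1) y(1) z(1)] XY normal.lcos_sum[OF normal] x y z
    by (simp_all add: LFactGroup_def)
qed

end

theorem mainTheorem11:
  fixes G :: "('a, 'c) monoid_scheme" and R :: "'a \<Rightarrow> 'a \<Rightarrow> bool" and H :: "'a set"
  assumes "oriented_group G R" and "subgroup H G"
  shows "(orientation_on (lcosets\<^bsub>G\<^esub> H) (quot_rel G R H) \<longleftrightarrow>
           (\<forall>q\<in>carrier G. \<forall>r\<in>carrier G.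
              R \<one>\<^bsub>G\<^esub> q \<and> R \<one>\<^bsub>G\<^esub> r \<and> q \<otimes>\<^bsub>G\<^esub> r \<in> H \<longrightarrow> q \<in> H \<and> r \<in> H))
       \<and> ((\<forall>q\<in>carrier G. \<forall>r\<in>carrier G.
              R \<one>\<^bsub>G\<^esub> q \<and> R \<one>\<^bsub>G\<^esub> r \<and> q \<otimes>\<^bsub>G\<^esub> r \<in> H \<longrightarrow> q \<in> H \<and> r \<in> H)
           \<and> H \<lhd> G \<longrightarrow> oriented_group (G LMod H) (quot_rel G R H))"
proof -
  interpret oriented_grp_subgroup G R H
    using assms by (auto simp: oriented_grp_subgroup_def oriented_grp_def oriented_grp_axioms_def oriented_group_def)
  show ?thesis
    using orientation_quot_rel_iff_pos_factor_closed oriented_group_LMod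
    unfolding pos_factor_closed_def by blast
qed

end
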